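(* Let $F$ be a field of characteristic not $2$, let $a\in F^*$ be a non-square, and let $L=F(\sqrt{a})$. Then $(F^{(4)}\cap L^{(3)})/F$ is a Galois extension.
   Context: All fields are taken inside a fixed quadratic closure $F_q$ of $F$. For a field $K$ of characteristic not $2$, define $K^{(1)}=K$ and, for $n\ge 1$, $K^{(n+1)}$ is the compositum of all quadratic extensions of $K^{(n)}$ which are Galois over $K$. *)

theory Defs
  imports "HOL-Computational_Algebra.Polynomial"
begin

text \<open>All fields are subsets of an ambient field type 'a (the fixed quadratic closure).\<close>

definition qc_subfield :: "'a::field set \<Rightarrow> bool" where
  "qc_subfield K \<longleftrightarrow> 0 \<in> K \<and> 1 \<in> K \<and>
     (\<forall>x\<in>K. \<forall>y\<in>K. x + y \<in> K \<and> x * y \<in> K) \<and>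
     (\<forall>x\<in>K. - x \<in> K) \<and> (\<forall>x\<in>K. x \<noteq> 0 \<longrightarrow> inverse x \<in> K)"

definition qc_gen_field :: "'a::field set \<Rightarrow> 'a set" where
  "qc_gen_field S = \<Inter> {T. qc_subfield T \<and> S \<subseteq> T}"

definition qc_quad_closure :: "'a::field set \<Rightarrow> 'a set" where
  "qc_quad_closure F = \<Inter> {T. qc_subfield T \<and> F \<subseteq> T \<and> (\<forall>x\<in>T. \<forall>y. y * y = x \<longrightarrow> y \<in> T)}"

definition qc_ext_dim :: "'a::field set \<Rightarrow> 'a set \<Rightarrow> nat \<Rightarrow> bool" where
  "qc_ext_dim K M n \<longleftrightarrow> (\<exists>xs. length xs = n \<and> set xs \<subseteq> M \<and>
     (\<forall>c. (\<forall>i<n. c i \<in> K) \<and> (\<Sum>i<n. c i * xs ! i) = 0 \<longrightarrow> (\<forall>i<n. c i = 0)) \<and>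
     M = {\<Sum>i<n. c i * xs ! i | c. \<forall>i<n. c i \<in> K})"

definition qc_quad_ext :: "'a::field set \<Rightarrow> 'a set \<Rightarrow> bool" where
  "qc_quad_ext K M \<longleftrightarrow> qc_subfield M \<and> K \<subseteq> M \<and> qc_ext_dim K M 2"

definition qc_over :: "'a::field set \<Rightarrow> 'a poly \<Rightarrow> bool" where
  "qc_over K p \<longleftrightarrow> (\<forall>i. coeff p i \<in> K)"

definition qc_irreducible_over :: "'a::field set \<Rightarrow> 'a poly \<Rightarrow> bool" where
  "qc_irreducible_over K p \<longleftrightarrow> qc_over K p \<and> degree p \<ge> 1 \<and>
     (\<forall>q r. qc_over K q \<and> qc_over K r \<and> p = q * r \<longrightarrow> degree q = 0 \<or> degree r = 0)"

text \<open>E/K Galois: algebraic, normal and separable, i.e. every element of E is a root of an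
  irreducible polynomial over K which splits into distinct linear factors over E.\<close>
definition qc_galois :: "'a::field set \<Rightarrow> 'a set \<Rightarrow> bool" where
  "qc_galois K E \<longleftrightarrow> qc_subfield K \<and> qc_subfield E \<and> K \<subseteq> E \<and>
     (\<forall>x\<in>E. \<exists>p. qc_irreducible_over K p \<and> poly p x = 0 \<and>
        (\<exists>rs. distinct rs \<and> set rs \<subseteq> E \<and>
              p = smult (lead_coeff p) (\<Prod>r\<leftarrow>rs. [:- r, 1:])))"

definition qc_compositum :: "'a::field set \<Rightarrow> 'a set set \<Rightarrow> 'a set" where
  "qc_compositum K Ms = qc_gen_field (K \<union> \<Union> Ms)"

text \<open>qc_tower K n = K^(n) for n \<ge> 1 (qc_tower K 0 is an unused dummy).\<close>
fun qc_tower :: "'a::field set \<Rightarrow> nat \<Rightarrow> 'a set" where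
  "qc_tower K 0 = K"
| "qc_tower K (Suc 0) = K"
| "qc_tower K (Suc (Suc n)) =
     qc_compositum (qc_tower K (Suc n))
       {M. qc_quad_ext (qc_tower K (Suc n)) M \<and> qc_galois K M}"

end

theory Submission
  imports Defs
begin

text \<open>Every automorphism of the quadratic closure fixing \<open>F\<close> permutes, layer by layer, the
  quadratic extensions that are Galois over the base, so it maps each \<open>F^(n)\<close> onto itself; it
  also maps \<open>L\<close> onto itself, sending \<open>\<surd>a\<close> to \<open>\<plusminus>\<surd>a\<close>. Hence \<open>E = F^(4) \<inter> L^(3)\<close> is stable under all
  of them, and every such intermediate field is Galois over \<open>F\<close>: the orbit of \<open>x \<in> E\<close> is finite
  and lies in \<open>E\<close>, the polynomial \<open>\<Prod>(X - r)\<close> over the orbit is irreducible over \<open>F\<close> since a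
  factor vanishing at \<open>x\<close> vanishes on the whole orbit, and its coefficients lie in \<open>F\<close> because
  \<open>F\<close> is the fixed field of these automorphisms (homomorphisms extend one square root at a time,
  by Zorn's lemma).\<close>

section \<open>Subfields and homomorphisms defined on them\<close>

lemma subfield_0: "qc_subfield K \<Longrightarrow> 0 \<in> K"
  and subfield_1: "qc_subfield K \<Longrightarrow> 1 \<in> K"
  and subfield_add: "qc_subfield K \<Longrightarrow> x \<in> K \<Longrightarrow> y \<in> K \<Longrightarrow> x + y \<in> K"
  and subfield_mult: "qc_subfield K \<Longrightarrow> x \<in> K \<Longrightarrow> y \<in> K \<Longrightarrow> x * y \<in> K"
  and subfield_uminus: "qc_subfield K \<Longrightarrow> x \<in> K \<Longrightarrow> - x \<in> K"
  by (simp_all add: qc_subfield_def)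

lemma subfield_inverse: "qc_subfield K \<Longrightarrow> x \<in> K \<Longrightarrow> inverse x \<in> K"
  by (cases "x = 0") (auto simp add: qc_subfield_def)

lemma subfield_diff: "qc_subfield K \<Longrightarrow> x \<in> K \<Longrightarrow> y \<in> K \<Longrightarrow> x - y \<in> K"
  by (metis diff_conv_add_uminus subfield_add subfield_uminus)

lemma subfield_divide: "qc_subfield K \<Longrightarrow> x \<in> K \<Longrightarrow> y \<in> K \<Longrightarrow> x / y \<in> K"
  by (metis divide_inverse subfield_inverse subfield_mult)

lemma subfield_UNIV: "qc_subfield (UNIV :: 'a::field set)"
  by (simp add: qc_subfield_def)

lemma subfield_Int: "qc_subfield A \<Longrightarrow> qc_subfield B \<Longrightarrow> qc_subfield (A \<inter> B)"
  unfolding qc_subfield_def by auto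

lemma subfield_Union_chain:
  assumes "C \<noteq> {}" and chain: "\<And>X Y. X \<in> C \<Longrightarrow> Y \<in> C \<Longrightarrow> X \<subseteq> Y \<or> Y \<subseteq> X"
    and sub: "\<And>X. X \<in> C \<Longrightarrow> qc_subfield X"
  shows "qc_subfield (\<Union>C)"
  unfolding qc_subfield_def
proof (intro conjI ballI impI)
  obtain X where "X \<in> C" using assms(1) by blast
  then show "0 \<in> \<Union>C" "1 \<in> \<Union>C" using sub subfield_0 subfield_1 by blast+
next
  fix x y assume "x \<in> \<Union>C" "y \<in> \<Union>C"
  then obtain Z where "Z \<in> C" "x \<in> Z" "y \<in> Z" using chain by blast
  then show "x + y \<in> \<Union>C" "x * y \<in> \<Union>C" using sub subfield_add subfield_mult by blast+
next
  fix x assume "x \<in> \<Union>C"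
  then obtain Z where "Z \<in> C" "x \<in> Z" by blast
  then show "- x \<in> \<Union>C" "inverse x \<in> \<Union>C" using sub subfield_uminus subfield_inverse by blast+
qed

lemma subfield_gen_field: "qc_subfield (qc_gen_field S)"
  unfolding qc_gen_field_def qc_subfield_def by blast

lemma gen_field_superset: "S \<subseteq> qc_gen_field S"
  unfolding qc_gen_field_def by blast

lemma gen_field_least: "qc_subfield T \<Longrightarrow> S \<subseteq> T \<Longrightarrow> qc_gen_field S \<subseteq> T"
  unfolding qc_gen_field_def by blast

lemma gen_field_insert_uminus_subset:
  "qc_gen_field (insert (- r) S) \<subseteq> qc_gen_field (insert r S)"
proof (rule gen_field_least[OF subfield_gen_field])
  have "r \<in> qc_gen_field (insert r S)" "S \<subseteq> qc_gen_field (insert r S)"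
    using gen_field_superset by blast+
  then show "insert (- r) S \<subseteq> qc_gen_field (insert r S)"
    using subfield_uminus[OF subfield_gen_field] by blast
qed

definition hom_on :: "'a::field set \<Rightarrow> ('a \<Rightarrow> 'a) \<Rightarrow> bool" where
  "hom_on D f \<longleftrightarrow> f 1 = 1 \<and> (\<forall>x\<in>D. \<forall>y\<in>D. f (x + y) = f x + f y \<and> f (x * y) = f x * f y)"

lemma hom_on_1: "hom_on D f \<Longrightarrow> f 1 = 1"
  and hom_on_add: "hom_on D f \<Longrightarrow> x \<in> D \<Longrightarrow> y \<in> D \<Longrightarrow> f (x + y) = f x + f y"
  and hom_on_mult: "hom_on D f \<Longrightarrow> x \<in> D \<Longrightarrow> y \<in> D \<Longrightarrow> f (x * y) = f x * f y"
  by (simp_all add: hom_on_def)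

lemma hom_on_subset: "hom_on D f \<Longrightarrow> K \<subseteq> D \<Longrightarrow> hom_on K f"
  unfolding hom_on_def by blast

lemma hom_on_cong: "qc_subfield D \<Longrightarrow> hom_on D f \<Longrightarrow> (\<And>x. x \<in> D \<Longrightarrow> g x = f x) \<Longrightarrow> hom_on D g"
  unfolding hom_on_def by (simp add: subfield_add subfield_mult subfield_1)

lemma hom_on_Union_chain:
  assumes "\<D> \<noteq> {}" and chain: "\<And>X Y. X \<in> \<D> \<Longrightarrow> Y \<in> \<D> \<Longrightarrow> X \<subseteq> Y \<or> Y \<subseteq> X"
    and hom: "\<And>X. X \<in> \<D> \<Longrightarrow> hom_on X f"
  shows "hom_on (\<Union>\<D>) f"
  unfolding hom_on_def
proof (intro conjI ballI)
  show "f 1 = 1" using assms(1) hom hom_on_1 by blast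
  fix x y assume "x \<in> \<Union>\<D>" "y \<in> \<Union>\<D>"
  then obtain Z where "Z \<in> \<D>" "x \<in> Z" "y \<in> Z" using chain by blast
  then show "f (x + y) = f x + f y" "f (x * y) = f x * f y"
    by (simp_all add: hom_on_add[OF hom] hom_on_mult[OF hom])
qed

context
  fixes D :: "'a::field set" and f :: "'a \<Rightarrow> 'a"
  assumes D: "qc_subfield D" and f: "hom_on D f"
begin

lemma hom_on_0: "f 0 = 0"
  using hom_on_add[OF f, of 0 0] subfield_0[OF D] by (metis add.right_neutral add_left_cancel)

lemma hom_on_uminus: "x \<in> D \<Longrightarrow> f (- x) = - f x"
  using hom_on_add[OF f, of x "- x"] subfield_uminus[OF D] hom_on_0
  by (metis neg_eq_iff_add_eq_0 add.right_inverse)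

lemma hom_on_diff: "x \<in> D \<Longrightarrow> y \<in> D \<Longrightarrow> f (x - y) = f x - f y"
  using hom_on_add[OF f, of x "- y"] hom_on_uminus[of y] subfield_uminus[OF D] by simp

lemma hom_on_inverse: "x \<in> D \<Longrightarrow> f (inverse x) = inverse (f x)"
proof (cases "x = 0")
  case False
  assume "x \<in> D"
  then have "f x * f (inverse x) = 1"
    using hom_on_mult[OF f, of x "inverse x"] subfield_inverse[OF D] hom_on_1[OF f] False by simp
  then show ?thesis by (metis inverse_unique)
qed (simp add: hom_on_0)

lemma hom_on_inj: "inj_on f D"
proof (rule inj_onI, rule ccontr)
  fix x y assume xy: "x \<in> D" "y \<in> D" "f x = f y" "x \<noteq> y"
  have "f (x - y) * f (inverse (x - y)) = 1"
    using hom_on_mult[OF f, of "x - y" "inverse (x - y)"] hom_on_1[OF f] xy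
      subfield_diff[OF D] subfield_inverse[OF D] by simp
  then show False using xy by (simp add: hom_on_diff)
qed

lemma subfield_image_hom_on: "qc_subfield (f ` D)"
  unfolding qc_subfield_def
proof (intro conjI ballI impI)
  show "0 \<in> f ` D" "1 \<in> f ` D"
    using hom_on_0 hom_on_1[OF f] subfield_0[OF D] subfield_1[OF D] by (metis image_eqI)+
next
  fix x y assume "x \<in> f ` D" "y \<in> f ` D"
  then obtain u v where "u \<in> D" "v \<in> D" "x = f u" "y = f v" by blast
  then show "x + y \<in> f ` D" "x * y \<in> f ` D"
    using hom_on_add[OF f] hom_on_mult[OF f] subfield_add[OF D] subfield_mult[OF D]
    by (metis image_eqI)+
next
  fix x assume "x \<in> f ` D"
  then obtain u where "u \<in> D" "x = f u" by blast
  then show "- x \<in> f ` D" "inverse x \<in> f ` D"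
    using hom_on_uminus hom_on_inverse subfield_uminus[OF D] subfield_inverse[OF D]
    by (metis image_eqI)+
qed

end

section \<open>Adjoining a square root\<close>

definition adjoin :: "'a::field set \<Rightarrow> 'a \<Rightarrow> 'a set" where
  "adjoin D y = {u + v * y | u v. u \<in> D \<and> v \<in> D}"

lemma adjoinI: "u \<in> D \<Longrightarrow> v \<in> D \<Longrightarrow> u + v * y \<in> adjoin D y"
  unfolding adjoin_def by blast

lemma subset_adjoin: "qc_subfield D \<Longrightarrow> D \<subseteq> adjoin D y"
  using adjoinI[of _ D 0] subfield_0 by fastforce

lemma in_adjoin: "qc_subfield D \<Longrightarrow> y \<in> adjoin D y"
  using adjoinI[of 0 D 1 y] subfield_0 subfield_1 by fastforce

context
  fixes D :: "'a::field set" and y :: 'a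
  assumes D: "qc_subfield D" and sq_in: "y * y \<in> D" and notin: "y \<notin> D"
begin

lemma adjoin_coords_unique:
  assumes "u \<in> D" "v \<in> D" "u' \<in> D" "v' \<in> D" and "u + v * y = u' + v' * y"
  shows "u = u' \<and> v = v'"
proof (cases "v = v'")
  case False
  then have "y = (u' - u) / (v - v')"
    using assms(5) by (simp add: field_simps)
  then show ?thesis using assms notin D by (simp add: subfield_divide subfield_diff)
qed (use assms in simp)

lemma adjoin_mult:
  "(u + v * y) * (u' + v' * y) = (u * u' + v * v' * (y * y)) + (u * v' + u' * v) * y"
  by (simp add: algebra_simps)

lemma subfield_adjoin: "qc_subfield (adjoin D y)"
  unfolding qc_subfield_def
proof (intro conjI ballI impI)
  show "0 \<in> adjoin D y" "1 \<in> adjoin D y"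
    using subset_adjoin[OF D] subfield_0[OF D] subfield_1[OF D] by blast+
next
  fix w w' assume "w \<in> adjoin D y" "w' \<in> adjoin D y"
  then obtain u v u' v' where uv: "u \<in> D" "v \<in> D" "u' \<in> D" "v' \<in> D"
    and w: "w = u + v * y" "w' = u' + v' * y" unfolding adjoin_def by blast
  have "w + w' = (u + u') + (v + v') * y" using w by (simp add: algebra_simps)
  then show "w + w' \<in> adjoin D y" using uv D by (simp add: adjoinI subfield_add)
  show "w * w' \<in> adjoin D y"
    unfolding w adjoin_mult using uv D sq_in by (simp add: adjoinI subfield_add subfield_mult)
next
  fix w assume "w \<in> adjoin D y"
  then obtain u v where uv: "u \<in> D" "v \<in> D" and w: "w = u + v * y" unfolding adjoin_def by blast
  show "- w \<in> adjoin D y"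
    using adjoinI[of "- u" D "- v" y] uv w D by (simp add: subfield_uminus)
  \<comment> \<open>The norm \<open>u\<^sup>2 - v\<^sup>2 y\<^sup>2\<close> is nonzero since \<open>y \<notin> D\<close>; multiply by the conjugate.\<close>
  define d where "d = u * u - v * v * (y * y)"
  have "d \<noteq> 0" if "w \<noteq> 0"
  proof
    assume "d = 0"
    then have "u * u = (v * y) * (v * y)" unfolding d_def by (simp add: algebra_simps)
    then have "u = v * y \<or> u = - (v * y)" by (simp add: square_eq_iff)
    moreover have "v \<noteq> 0" using \<open>u * u = _\<close> that w by auto
    ultimately have "y = u / v \<or> y = - u / v" by (auto simp: field_simps)
    then show False using notin uv D by (auto intro: subfield_divide subfield_uminus)
  qed
  moreover have "d \<in> D" unfolding d_def using uv D sq_in by (simp add: subfield_diff subfield_mult)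
  moreover have "w * (u / d + (- v / d) * y) = 1" if "d \<noteq> 0"
  proof -
    have "w * (u - v * y) = d" unfolding w d_def by (simp add: algebra_simps)
    moreover have "u / d + (- v / d) * y = (u - v * y) / d" by (simp add: diff_divide_distrib)
    ultimately show ?thesis using that by simp
  qed
  ultimately show "inverse w \<in> adjoin D y" if "w \<noteq> 0"
    using that uv D inverse_unique by (metis adjoinI subfield_divide subfield_uminus)
qed

lemma hom_on_extend_adjoin:
  assumes f: "hom_on D f" and c: "c * c = f (y * y)"
  obtains g where "hom_on (adjoin D y) g" "\<And>x. x \<in> D \<Longrightarrow> g x = f x" "g y = c"
proof -
  define coords where "coords w = (SOME (u, v). u \<in> D \<and> v \<in> D \<and> w = u + v * y)" for w
  define g where "g w = (case coords w of (u, v) \<Rightarrow> f u + f v * c)" for w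
  have g: "g (u + v * y) = f u + f v * c" if "u \<in> D" "v \<in> D" for u v
  proof -
    have "coords (u + v * y) = (u, v)"
      unfolding coords_def using that adjoin_coords_unique by (intro some_equality) auto
    then show ?thesis unfolding g_def by simp
  qed
  have gD: "g x = f x" if "x \<in> D" for x
    using g[OF that subfield_0[OF D]] hom_on_0[OF D f] by simp
  have "hom_on (adjoin D y) g"
    unfolding hom_on_def
  proof (intro conjI ballI)
    show "g 1 = 1" using gD subfield_1[OF D] hom_on_1[OF f] by simp
    fix w w' assume "w \<in> adjoin D y" "w' \<in> adjoin D y"
    then obtain u v u' v' where uv: "u \<in> D" "v \<in> D" "u' \<in> D" "v' \<in> D"
      and w: "w = u + v * y" "w' = u' + v' * y" unfolding adjoin_def by blast
    have "w + w' = (u + u') + (v + v') * y" using w by (simp add: algebra_simps)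
    then have "g (w + w') = f (u + u') + f (v + v') * c" using uv D by (simp add: g subfield_add)
    then show "g (w + w') = g w + g w'"
      using uv w by (simp add: g hom_on_add[OF f] algebra_simps)
    have "g (w * w') = f (u * u' + v * v' * (y * y)) + f (u * v' + u' * v) * c"
      unfolding w adjoin_mult using uv D sq_in by (simp add: g subfield_add subfield_mult)
    then show "g (w * w') = g w * g w'"
      using uv w D sq_in c
      by (simp add: g subfield_mult hom_on_add[OF f] hom_on_mult[OF f] algebra_simps)
  qed
  moreover have "g y = c"
    using g[OF subfield_0[OF D] subfield_1[OF D]] hom_on_0[OF D f] hom_on_1[OF f] by simp
  ultimately show ?thesis using that gD by blast
qed

end

section \<open>Automorphisms and the structures they transport\<close>

definition aut :: "('a::field \<Rightarrow> 'a) \<Rightarrow> bool" where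
  "aut s \<longleftrightarrow> bij s \<and> hom_on UNIV s"

lemma aut_id: "aut id"
  unfolding aut_def hom_on_def by simp

lemma aut_comp: "aut s \<Longrightarrow> aut t \<Longrightarrow> aut (s \<circ> t)"
  unfolding aut_def hom_on_def by (auto intro: bij_comp)

context
  fixes s :: "'a::field \<Rightarrow> 'a"
  assumes s: "aut s"
begin

lemma aut_hom_on: "hom_on K s"
  using s hom_on_subset unfolding aut_def by blast

lemma aut_1 [simp]: "s 1 = 1"
  and aut_add [simp]: "s (x + y) = s x + s y"
  and aut_mult [simp]: "s (x * y) = s x * s y"
  and aut_0 [simp]: "s 0 = 0"
  and aut_uminus [simp]: "s (- x) = - s x"
  and aut_inverse [simp]: "s (inverse x) = inverse (s x)"
  using aut_hom_on[of UNIV] hom_on_0[OF subfield_UNIV] hom_on_uminus[OF subfield_UNIV]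
    hom_on_inverse[OF subfield_UNIV]
  by (simp_all add: hom_on_1 hom_on_add hom_on_mult)

lemma aut_eq_0_iff [simp]: "s x = 0 \<longleftrightarrow> x = 0"
  using s aut_0 unfolding aut_def bij_def by (metis injD)

lemma aut_inj: "inj s"
  using s unfolding aut_def bij_def by blast

lemma inv_aut_apply [simp]: "inv s (s x) = x"
  using s unfolding aut_def bij_def by (simp add: inv_f_f)

lemma aut_apply_inv [simp]: "s (inv s x) = x"
  using s unfolding aut_def bij_def by (simp add: surj_f_inv_f)

lemma aut_inv: "aut (inv s)"
  unfolding aut_def hom_on_def
proof (intro conjI ballI)
  show "bij (inv s)" using s unfolding aut_def by (simp add: bij_imp_bij_inv)
  show "inv s 1 = 1" using inv_aut_apply[of 1] by simp
  fix x y :: 'a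
  show "inv s (x + y) = inv s x + inv s y"
    using inv_aut_apply[of "inv s x + inv s y"] by simp
  show "inv s (x * y) = inv s x * inv s y"
    using inv_aut_apply[of "inv s x * inv s y"] by simp
qed

lemma aut_sum: "s (\<Sum>i\<in>A. f i) = (\<Sum>i\<in>A. s (f i))"
  by (induction A rule: infinite_finite_induct) simp_all

lemma aut_power: "s (x ^ n) = s x ^ n"
  by (induction n) simp_all

lemma subfield_image_aut: "qc_subfield K \<Longrightarrow> qc_subfield (s ` K)"
  using subfield_image_hom_on aut_hom_on by blast

lemma subfield_vimage_aut: "qc_subfield K \<Longrightarrow> qc_subfield (s -` K)"
  unfolding qc_subfield_def by simp

lemma image_gen_field: "s ` qc_gen_field S = qc_gen_field (s ` S)"
proof
  have "S \<subseteq> s -` qc_gen_field (s ` S)" using gen_field_superset by blast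
  then have "qc_gen_field S \<subseteq> s -` qc_gen_field (s ` S)"
    by (rule gen_field_least[OF subfield_vimage_aut[OF subfield_gen_field]])
  then show "s ` qc_gen_field S \<subseteq> qc_gen_field (s ` S)" by blast
  have "s ` S \<subseteq> s ` qc_gen_field S" by (rule image_mono[OF gen_field_superset])
  then show "qc_gen_field (s ` S) \<subseteq> s ` qc_gen_field S"
    by (rule gen_field_least[OF subfield_image_aut[OF subfield_gen_field]])
qed

lemma aut_lincomb:
  "length xs = n \<Longrightarrow> s (\<Sum>i<n. c i * xs ! i) = (\<Sum>i<n. s (c i) * map s xs ! i)"
  by (simp add: aut_sum)

lemma ext_dim_image_aut:
  assumes "qc_ext_dim K M n"
  shows "qc_ext_dim (s ` K) (s ` M) n"
proof -
  obtain xs where xs: "length xs = n" "set xs \<subseteq> M"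
    and indep: "\<And>c. \<forall>i<n. c i \<in> K \<Longrightarrow> (\<Sum>i<n. c i * xs ! i) = 0 \<Longrightarrow> \<forall>i<n. c i = 0"
    and span: "M = {\<Sum>i<n. c i * xs ! i | c. \<forall>i<n. c i \<in> K}"
    using assms unfolding qc_ext_dim_def by blast
  have pull: "(\<forall>i<n. (inv s \<circ> c') i \<in> K) \<and> (\<Sum>i<n. c' i * map s xs ! i) = s (\<Sum>i<n. (inv s \<circ> c') i * xs ! i)"
    if "\<forall>i<n. c' i \<in> s ` K" for c'
    using that xs(1) by (auto simp: aut_lincomb)
  have "\<forall>i<n. c' i = 0"
    if "\<forall>i<n. c' i \<in> s ` K" "(\<Sum>i<n. c' i * map s xs ! i) = 0" for c'
    using indep[of "inv s \<circ> c'"] pull[OF that(1)] that by (metis aut_apply_inv aut_eq_0_iff comp_apply)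
  moreover have "s ` M = {\<Sum>i<n. c' i * map s xs ! i | c'. \<forall>i<n. c' i \<in> s ` K}"
  proof
    show "s ` M \<subseteq> {\<Sum>i<n. c' i * map s xs ! i | c'. \<forall>i<n. c' i \<in> s ` K}"
      unfolding span using xs(1) by (auto simp: aut_lincomb)
    show "{\<Sum>i<n. c' i * map s xs ! i | c'. \<forall>i<n. c' i \<in> s ` K} \<subseteq> s ` M"
      unfolding span using pull by blast
  qed
  moreover have "length (map s xs) = n" "set (map s xs) \<subseteq> s ` M" using xs by auto
  ultimately show ?thesis
    unfolding qc_ext_dim_def by (intro exI[of _ "map s xs"]) blast
qed

lemma quad_ext_image_aut: "qc_quad_ext K M \<Longrightarrow> qc_quad_ext (s ` K) (s ` M)"
  unfolding qc_quad_ext_def using subfield_image_aut ext_dim_image_aut by blast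

lemma coeff_map_poly_aut [simp]: "coeff (map_poly s p) i = s (coeff p i)"
  by (simp add: coeff_map_poly)

lemma degree_map_poly_aut [simp]: "degree (map_poly s p) = degree p"
  by (simp add: degree_map_poly)

lemma map_poly_aut_mult: "map_poly s (p * q) = map_poly s p * map_poly s q"
  by (rule poly_eqI) (simp add: coeff_mult aut_sum)

lemma map_poly_aut_smult: "map_poly s (smult c p) = smult (s c) (map_poly s p)"
  by (rule poly_eqI) simp

lemma map_poly_aut_prod: "map_poly s (\<Prod>i\<in>A. p i) = (\<Prod>i\<in>A. map_poly s (p i))"
  by (induction A rule: infinite_finite_induct) (simp_all add: map_poly_aut_mult)

lemma map_poly_aut_prod_list: "map_poly s (prod_list ps) = prod_list (map (map_poly s) ps)"
  by (induction ps) (simp_all add: map_poly_aut_mult)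

lemma map_poly_aut_linear [simp]: "map_poly s [:- r, 1:] = [:- s r, 1:]"
  by (rule poly_eqI) (simp add: coeff_pCons split: nat.split)

lemma poly_map_poly_aut: "poly (map_poly s p) (s x) = s (poly p x)"
  by (simp add: poly_altdef aut_sum aut_power)

lemma over_image_aut: "qc_over K p \<Longrightarrow> qc_over (s ` K) (map_poly s p)"
  unfolding qc_over_def by simp

end

lemma over_inv_image_aut: "aut s \<Longrightarrow> qc_over (s ` K) p \<Longrightarrow> qc_over K (map_poly (inv s) p)"
  using over_image_aut[OF aut_inv, of s "s ` K" p] by (simp add: image_image)

lemma map_poly_inv_aut: "aut s \<Longrightarrow> map_poly (inv s) (map_poly s p) = p"
  by (rule poly_eqI) (simp add: aut_inv)

lemma irreducible_over_image_aut:
  assumes s: "aut s" and p: "qc_irreducible_over K p"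
  shows "qc_irreducible_over (s ` K) (map_poly s p)"
  unfolding qc_irreducible_over_def
proof (intro conjI allI impI)
  show "qc_over (s ` K) (map_poly s p)" "1 \<le> degree (map_poly s p)"
    using p s by (simp_all add: qc_irreducible_over_def over_image_aut)
  fix q r assume qr: "qc_over (s ` K) q \<and> qc_over (s ` K) r \<and> map_poly s p = q * r"
  then have "p = map_poly (inv s) q * map_poly (inv s) r"
    by (metis map_poly_inv_aut map_poly_aut_mult aut_inv s)
  then show "degree q = 0 \<or> degree r = 0"
    using p qr over_inv_image_aut[OF s] unfolding qc_irreducible_over_def
    by (metis degree_map_poly_aut aut_inv s)
qed

lemma galois_image_aut:
  assumes s: "aut s" and E: "qc_galois K E"
  shows "qc_galois (s ` K) (s ` E)"
  unfolding qc_galois_def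
proof (intro conjI ballI)
  show "qc_subfield (s ` K)" "qc_subfield (s ` E)" "s ` K \<subseteq> s ` E"
    using E s subfield_image_aut unfolding qc_galois_def by blast+
  fix y assume "y \<in> s ` E"
  then obtain x where x: "x \<in> E" "y = s x" by blast
  then obtain p rs where p: "qc_irreducible_over K p" "poly p x = 0" "distinct rs" "set rs \<subseteq> E"
    "p = smult (lead_coeff p) (\<Prod>r\<leftarrow>rs. [:- r, 1:])"
    using E unfolding qc_galois_def by blast
  have "map_poly s p = smult (lead_coeff (map_poly s p)) (\<Prod>r\<leftarrow>map s rs. [:- r, 1:])"
    using s by (subst p(5)) (simp add: map_poly_aut_smult map_poly_aut_prod_list o_def)
  moreover have "distinct (map s rs)"
    using p(3) inj_on_subset[OF aut_inj[OF s] subset_UNIV] by (simp add: distinct_map)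
  moreover have "poly (map_poly s p) y = 0" using p(2) x s by (simp add: poly_map_poly_aut)
  ultimately show "\<exists>q. qc_irreducible_over (s ` K) q \<and> poly q y = 0 \<and>
      (\<exists>rs. distinct rs \<and> set rs \<subseteq> s ` E \<and> q = smult (lead_coeff q) (\<Prod>r\<leftarrow>rs. [:- r, 1:]))"
    using irreducible_over_image_aut[OF s p(1)] p(4)
    by (intro exI[of _ "map_poly s p"] conjI exI[of _ "map s rs"]) auto
qed

lemma subset_tower: "K \<subseteq> qc_tower K n"
proof (induction K n rule: qc_tower.induct)
  case (3 K n)
  then show ?case
    unfolding qc_tower.simps qc_compositum_def using gen_field_superset by blast
qed simp_all

lemma subfield_tower: "qc_subfield K \<Longrightarrow> qc_subfield (qc_tower K n)"
  by (induction K n rule: qc_tower.induct) (simp_all add: qc_compositum_def subfield_gen_field)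

lemma tower_image_aut:
  assumes s: "aut s"
  shows "s ` qc_tower K n = qc_tower (s ` K) n"
proof (induction K n rule: qc_tower.induct)
  case (3 K n)
  let ?T = "qc_tower K (Suc n)" and ?T' = "qc_tower (s ` K) (Suc n)"
  have "(`) s ` {M. qc_quad_ext ?T M \<and> qc_galois K M}
      = {M. qc_quad_ext ?T' M \<and> qc_galois (s ` K) M}" (is "_ ` ?Ms = ?Ms'")
  proof
    show "(`) s ` ?Ms \<subseteq> ?Ms'"
      using quad_ext_image_aut[OF s, of ?T] galois_image_aut[OF s, of K] by (auto simp: 3)
    show "?Ms' \<subseteq> (`) s ` ?Ms"
    proof
      fix M assume M: "M \<in> ?Ms'"
      have "inv s ` ?T' = ?T" "inv s ` s ` K = K" by (simp_all flip: 3 add: image_image s)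
      then have "inv s ` M \<in> ?Ms"
        using M quad_ext_image_aut[OF aut_inv[OF s], of ?T' M]
          galois_image_aut[OF aut_inv[OF s], of "s ` K" M] by simp
      moreover have "M = s ` inv s ` M" by (simp add: image_image s)
      ultimately show "M \<in> (`) s ` ?Ms" by blast
    qed
  qed
  then show ?case
    using 3 s by (simp add: qc_compositum_def image_gen_field image_Un image_Union)
qed simp_all

section \<open>Maximal subfields and maximal extensions of homomorphisms\<close>

lemma maximal_subfield_avoiding:
  assumes "qc_subfield F" "z \<notin> F"
  obtains K where "qc_subfield K" "F \<subseteq> K" "z \<notin> K"
    "\<And>K'. qc_subfield K' \<Longrightarrow> K \<subseteq> K' \<Longrightarrow> z \<notin> K' \<Longrightarrow> K' = K"
proof -
  let ?A = "{K. qc_subfield K \<and> F \<subseteq> K \<and> z \<notin> K}"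
  have "\<exists>K\<in>?A. \<forall>K'\<in>?A. K \<subseteq> K' \<longrightarrow> K' = K"
  proof (rule subset_Zorn_nonempty)
    fix C assume "C \<noteq> {}" "subset.chain ?A C"
    then show "\<Union>C \<in> ?A"
      using subfield_Union_chain[of C] unfolding subset_chain_def by blast
  next
    show "?A \<noteq> {}" using assms by (metis (mono_tags) empty_iff mem_Collect_eq order_refl)
  qed
  then obtain K where "K \<in> ?A" "\<forall>K'\<in>?A. K \<subseteq> K' \<longrightarrow> K' = K" by blast
  then show ?thesis by (intro that[of K]) auto
qed

definition graph_on :: "'a set \<Rightarrow> ('a \<Rightarrow> 'b) \<Rightarrow> ('a \<times> 'b) set" where
  "graph_on D f = {(x, f x) | x. x \<in> D}"

lemma Domain_graph_on [simp]: "Domain (graph_on D f) = D"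
  unfolding graph_on_def by auto

lemma subset_graph_on_iff: "graph_on A g \<subseteq> graph_on B f \<longleftrightarrow> A \<subseteq> B \<and> (\<forall>x\<in>A. g x = f x)"
  unfolding graph_on_def by blast

lemma Union_chain_graph_on:
  assumes chain: "\<And>X Y. X \<in> C \<Longrightarrow> Y \<in> C \<Longrightarrow> X \<subseteq> Y \<or> Y \<subseteq> X"
    and graphs: "\<And>Z. Z \<in> C \<Longrightarrow> \<exists>D f. Z = graph_on D f"
  obtains f where "\<Union>C = graph_on (Domain (\<Union>C)) f"
proof
  have unique: "y = y'" if xy: "(x, y) \<in> \<Union>C" "(x, y') \<in> \<Union>C" for x y y'
  proof -
    obtain X Y where XY: "X \<in> C" "Y \<in> C" "(x, y) \<in> X" "(x, y') \<in> Y" using xy by blast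
    then obtain Z where Z: "Z \<in> C" "(x, y) \<in> Z" "(x, y') \<in> Z" using chain[of X Y] by blast
    then obtain D g where "Z = graph_on D g" using graphs by blast
    then show ?thesis using Z unfolding graph_on_def by blast
  qed
  define f where "f x = (SOME y. (x, y) \<in> \<Union>C)" for x
  have f: "f x = y" if "(x, y) \<in> \<Union>C" for x y
    unfolding f_def using that unique by (intro some_equality) blast+
  show "\<Union>C = graph_on (Domain (\<Union>C)) f"
  proof
    show "\<Union>C \<subseteq> graph_on (Domain (\<Union>C)) f"
    proof (rule subrelI)
      fix x y assume "(x, y) \<in> \<Union>C"
      then show "(x, y) \<in> graph_on (Domain (\<Union>C)) f"
        unfolding graph_on_def using f by blast
    qed
    show "graph_on (Domain (\<Union>C)) f \<subseteq> \<Union>C"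
      unfolding graph_on_def using f by (auto elim!: DomainE)
  qed
qed

definition extension_graphs :: "'a::field set \<Rightarrow> ('a \<Rightarrow> 'a) \<Rightarrow> ('a \<times> 'a) set set" where
  "extension_graphs D0 f0 =
     {graph_on D f | D f. qc_subfield D \<and> D0 \<subseteq> D \<and> hom_on D f \<and> (\<forall>x\<in>D0. f x = f0 x)}"

lemma Union_chain_extension_graphs:
  assumes "C \<noteq> {}" and "subset.chain (extension_graphs D0 f0) C"
  shows "\<Union>C \<in> extension_graphs D0 f0"
proof -
  have chain: "\<And>X Y. X \<in> C \<Longrightarrow> Y \<in> C \<Longrightarrow> X \<subseteq> Y \<or> Y \<subseteq> X"
    and extensions: "\<And>Z. Z \<in> C \<Longrightarrow> \<exists>D f. Z = graph_on D f \<and> qc_subfield D \<and> D0 \<subseteq> D \<and>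
      hom_on D f \<and> (\<forall>x\<in>D0. f x = f0 x)"
    using assms(2) unfolding subset_chain_def extension_graphs_def by blast+
  define D where "D = Domain (\<Union>C)"
  obtain f where f: "\<Union>C = graph_on D f"
    unfolding D_def by (rule Union_chain_graph_on[OF chain]) (use extensions in blast)+
  have piece: "qc_subfield (Domain Z) \<and> D0 \<subseteq> Domain Z \<and> hom_on (Domain Z) f \<and> (\<forall>x\<in>D0. f x = f0 x)"
    if Z: "Z \<in> C" for Z
  proof -
    obtain Dz fz where Dz: "Z = graph_on Dz fz" "qc_subfield Dz" "D0 \<subseteq> Dz" "hom_on Dz fz"
      "\<forall>x\<in>D0. fz x = f0 x" using extensions[OF Z] by blast
    have "graph_on Dz fz \<subseteq> graph_on D f" using f Z Dz(1) by blast
    then have "\<forall>x\<in>Dz. f x = fz x" by (simp add: subset_graph_on_iff)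
    then show ?thesis using Dz hom_on_cong[OF Dz(2,4)] by auto
  qed
  have "D = \<Union>(Domain ` C)" unfolding D_def by blast
  moreover have "X \<subseteq> Y \<or> Y \<subseteq> X" if "X \<in> Domain ` C" "Y \<in> Domain ` C" for X Y
    using that chain Domain_mono by (metis imageE)
  ultimately have "qc_subfield D" "hom_on D f"
    using subfield_Union_chain[of "Domain ` C"] hom_on_Union_chain[of "Domain ` C" f] assms(1) piece
    by auto
  moreover obtain Z where "Z \<in> C" using assms(1) by blast
  then have "D0 \<subseteq> D" "\<forall>x\<in>D0. f x = f0 x" using piece unfolding D_def by (blast dest: Domain_mono)+
  ultimately show ?thesis
    unfolding extension_graphs_def mem_Collect_eq by (intro exI[of _ D] exI[of _ f]) (simp add: f)
qed

section \<open>Automorphisms over a subfield, orbits and orbit polynomials\<close>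

definition aut_over :: "'a::field set \<Rightarrow> ('a \<Rightarrow> 'a) \<Rightarrow> bool" where
  "aut_over F s \<longleftrightarrow> aut s \<and> (\<forall>x\<in>F. s x = x)"

lemma aut_over_id: "aut_over F id"
  by (simp add: aut_over_def aut_id)

lemma aut_over_comp: "aut_over F s \<Longrightarrow> aut_over F t \<Longrightarrow> aut_over F (s \<circ> t)"
  by (simp add: aut_over_def aut_comp)

lemma aut_over_inv: "aut_over F s \<Longrightarrow> aut_over F (inv s)"
  unfolding aut_over_def by (metis aut_inv inv_aut_apply)

lemma image_aut_over: "aut_over F s \<Longrightarrow> s ` F = F"
  unfolding aut_over_def by simp

lemma gen_field_insert_sqrt_aut_over:
  assumes s: "aut_over F s" and "a \<in> F" "r * r = a"
  shows "s ` qc_gen_field (insert r F) = qc_gen_field (insert r F)"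
proof -
  have "s r * s r = r * r" using s assms by (simp add: aut_over_def flip: aut_mult)
  then have "s r = r \<or> s r = - r" by (simp add: square_eq_iff)
  moreover have "qc_gen_field (insert (- r) F) = qc_gen_field (insert r F)"
    using gen_field_insert_uminus_subset[of r F] gen_field_insert_uminus_subset[of "- r" F] by simp
  ultimately show ?thesis
    using s by (auto simp: aut_over_def image_gen_field image_aut_over[OF s])
qed

definition aut_orbit :: "'a::field set \<Rightarrow> 'a \<Rightarrow> 'a set" where
  "aut_orbit F x = {s x | s. aut_over F s}"

lemma aut_orbitI: "aut_over F s \<Longrightarrow> s x \<in> aut_orbit F x"
  unfolding aut_orbit_def by blast

lemma aut_orbit_self: "x \<in> aut_orbit F x"
  using aut_orbitI[OF aut_over_id] by simp

lemma image_aut_orbit: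
  assumes s: "aut_over F s"
  shows "s ` aut_orbit F x = aut_orbit F x"
proof
  show "s ` aut_orbit F x \<subseteq> aut_orbit F x"
  proof (rule image_subsetI)
    fix y assume "y \<in> aut_orbit F x"
    then obtain t where "aut_over F t" "y = t x" unfolding aut_orbit_def by blast
    then show "s y \<in> aut_orbit F x" using aut_orbitI[OF aut_over_comp[OF s]] by fastforce
  qed
  have "t x = s ((inv s \<circ> t) x)" if "aut_over F t" for t
    using s by (simp add: aut_over_def)
  then show "aut_orbit F x \<subseteq> s ` aut_orbit F x"
    unfolding aut_orbit_def using aut_over_comp[OF aut_over_inv[OF s]] by blast
qed

lemma aut_orbit_subset_roots:
  assumes "qc_over F p" "poly p x = 0"
  shows "aut_orbit F x \<subseteq> {y. poly p y = 0}"
proof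
  fix y assume "y \<in> aut_orbit F x"
  then obtain s where s: "aut_over F s" "y = s x" unfolding aut_orbit_def by blast
  then have "map_poly s p = p"
    using assms(1) by (intro poly_eqI) (simp add: aut_over_def qc_over_def)
  then show "y \<in> {y. poly p y = 0}"
    using s assms(2) poly_map_poly_aut[of s p x] by (simp add: aut_over_def)
qed

lemma card_aut_orbit_le_degree:
  assumes "qc_over F p" "p \<noteq> 0" "poly p x = 0"
  shows "card (aut_orbit F x) \<le> degree p"
  using card_mono[OF poly_roots_finite aut_orbit_subset_roots, of p F x] card_poly_roots_bound[of p]
    assms by linarith

lemma aut_orbit_subset_image:
  assumes "\<And>s. aut_over F s \<Longrightarrow> s (h x) = h (s x)"
  shows "aut_orbit F (h x) \<subseteq> h ` aut_orbit F x"
  unfolding aut_orbit_def using assms by blast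

lemma aut_orbit_subset_image2:
  assumes "\<And>s. aut_over F s \<Longrightarrow> s (h x y) = h (s x) (s y)"
  shows "aut_orbit F (h x y) \<subseteq> case_prod h ` (aut_orbit F x \<times> aut_orbit F y)"
proof
  fix w assume "w \<in> aut_orbit F (h x y)"
  then obtain s where "aut_over F s" "w = h (s x) (s y)" unfolding aut_orbit_def using assms by blast
  then show "w \<in> case_prod h ` (aut_orbit F x \<times> aut_orbit F y)"
    using aut_orbitI[of F s] by force
qed

lemma aut_orbit_subset_sqrts: "aut_orbit F y \<subseteq> (\<Union>w\<in>aut_orbit F (y * y). {t. t * t = w})"
  unfolding aut_orbit_def aut_over_def by (force simp flip: aut_mult)

lemma aut_orbit_of_mem: "c \<in> F \<Longrightarrow> aut_orbit F c = {c}"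
  using aut_orbit_self[of c F] unfolding aut_orbit_def aut_over_def by auto

lemma finite_sqrts: "finite {t :: 'a::field. t * t = w}"
proof (cases "\<exists>r. r * r = w")
  case True
  then obtain r where "r * r = w" by blast
  then have "{t. t * t = w} \<subseteq> {r, - r}" by (auto simp: square_eq_iff)
  then show ?thesis by (rule finite_subset) simp
qed simp

definition orbit_poly :: "'a::field set \<Rightarrow> 'a \<Rightarrow> 'a poly" where
  "orbit_poly F x = (\<Prod>r\<in>aut_orbit F x. [:- r, 1:])"

lemma orbit_poly_root: "finite (aut_orbit F x) \<Longrightarrow> poly (orbit_poly F x) x = 0"
  unfolding orbit_poly_def by (simp add: poly_prod aut_orbit_self prod_zero_iff)

lemma degree_orbit_poly: "degree (orbit_poly F x) = card (aut_orbit F x)"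
  unfolding orbit_poly_def by (subst degree_prod_eq_sum_degree) simp_all

lemma monic_orbit_poly: "lead_coeff (orbit_poly F x) = 1"
  unfolding orbit_poly_def by (simp add: lead_coeff_prod)

lemma map_poly_orbit_poly:
  assumes "aut_over F s"
  shows "map_poly s (orbit_poly F x) = orbit_poly F x"
proof -
  have "map_poly s (orbit_poly F x) = (\<Prod>r\<in>aut_orbit F x. [:- s r, 1:])"
    using assms by (simp add: orbit_poly_def aut_over_def map_poly_aut_prod)
  also have "\<dots> = (\<Prod>r\<in>s ` aut_orbit F x. [:- r, 1:])"
    using assms prod.reindex[OF inj_on_subset[OF aut_inj subset_UNIV], of s "\<lambda>r. [:- r, 1:]"]
    by (simp add: aut_over_def o_def)
  finally show ?thesis by (simp add: image_aut_orbit[OF assms] orbit_poly_def)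
qed

section \<open>Automorphisms of a quadratic closure\<close>

locale quadratic_closure =
  fixes F :: "'a::field set"
  assumes subfield_F: "qc_subfield F"
    and two_nonzero: "(2::'a) \<noteq> 0"
    and squares: "\<forall>x::'a. \<exists>y. y * y = x"
    and quad_closure_UNIV: "qc_quad_closure F = UNIV"
begin

lemma sqrt_closed_eq_UNIV:
  assumes "qc_subfield T" "F \<subseteq> T" "\<And>x y. x \<in> T \<Longrightarrow> y * y = x \<Longrightarrow> y \<in> T"
  shows "T = UNIV"
proof -
  have "qc_quad_closure F \<subseteq> T" unfolding qc_quad_closure_def using assms by blast
  then show ?thesis using quad_closure_UNIV by blast
qed

lemma hom_on_extends_to_UNIV:
  assumes D0: "qc_subfield D0" "F \<subseteq> D0" and f0: "hom_on D0 f0"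
  obtains f where "hom_on UNIV f" "\<And>x. x \<in> D0 \<Longrightarrow> f x = f0 x"
proof -
  have "\<exists>G\<in>extension_graphs D0 f0. \<forall>G'\<in>extension_graphs D0 f0. G \<subseteq> G' \<longrightarrow> G' = G"
  proof (rule subset_Zorn_nonempty)
    have "graph_on D0 f0 \<in> extension_graphs D0 f0"
      unfolding extension_graphs_def using D0 f0 by blast
    then show "extension_graphs D0 f0 \<noteq> {}" by blast
  qed (rule Union_chain_extension_graphs)
  then obtain G where G: "G \<in> extension_graphs D0 f0"
    and max: "\<And>G'. G' \<in> extension_graphs D0 f0 \<Longrightarrow> G \<subseteq> G' \<Longrightarrow> G' = G"
    by blast
  then obtain D f where ext: "G = graph_on D f" "qc_subfield D" "D0 \<subseteq> D" "hom_on D f"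
      "\<forall>x\<in>D0. f x = f0 x"
    unfolding extension_graphs_def by blast
  have "y \<in> D" if y: "y * y \<in> D" for y
  proof (rule ccontr)
    assume "y \<notin> D"
    obtain c where "c * c = f (y * y)" using squares by blast
    then obtain g where g: "hom_on (adjoin D y) g" "\<And>x. x \<in> D \<Longrightarrow> g x = f x"
      using hom_on_extend_adjoin[OF ext(2) y \<open>y \<notin> D\<close> ext(4)] by blast
    have "graph_on (adjoin D y) g \<in> extension_graphs D0 f0"
      unfolding extension_graphs_def mem_Collect_eq
      using subfield_adjoin[OF ext(2) y \<open>y \<notin> D\<close>] subset_adjoin[OF ext(2)] ext(3,5) g
      by (intro exI[of _ "adjoin D y"] exI[of _ g]) auto
    moreover have "G \<subseteq> graph_on (adjoin D y) g"
      using ext(1) subset_adjoin[OF ext(2)] g(2) by (simp add: subset_graph_on_iff)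
    ultimately have "graph_on (adjoin D y) g = graph_on D f" using max ext(1) by blast
    then have "adjoin D y = D" by (metis Domain_graph_on)
    then show False using in_adjoin[OF ext(2)] \<open>y \<notin> D\<close> by blast
  qed
  then have "D = UNIV" using sqrt_closed_eq_UNIV ext(2,3) D0(2) by blast
  then show ?thesis using that ext(4,5) by blast
qed

lemma surj_hom_on_fixing:
  assumes f: "hom_on UNIV f" and fixes_F: "\<And>x. x \<in> F \<Longrightarrow> f x = x"
  shows "surj f"
proof (rule sqrt_closed_eq_UNIV)
  show "qc_subfield (range f)" using subfield_image_hom_on[OF subfield_UNIV f] .
  show "F \<subseteq> range f" using fixes_F by (metis image_eqI subsetI UNIV_I)
  fix x y assume "x \<in> range f" "y * y = x"
  then obtain a where "y * y = f a" by blast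
  moreover obtain t where "t * t = a" using squares by blast
  ultimately have "y * y = f t * f t" using hom_on_mult[OF f, of t t] by simp
  then have "y = f t \<or> y = - f t" by (simp add: square_eq_iff)
  then show "y \<in> range f" using hom_on_uminus[OF subfield_UNIV f] by (metis rangeI UNIV_I)
qed

lemma aut_over_if_hom_on_fixing:
  assumes "hom_on UNIV f" "\<And>x. x \<in> F \<Longrightarrow> f x = x"
  shows "aut_over F f"
  using assms surj_hom_on_fixing hom_on_inj[OF subfield_UNIV]
  unfolding aut_over_def aut_def bij_def by blast

lemma conjugation_extends_to_aut_over:
  assumes K: "qc_subfield K" "F \<subseteq> K" and y: "y * y \<in> K" "y \<notin> K"
  obtains s where "aut_over F s" "\<And>x. x \<in> K \<Longrightarrow> s x = x" "s y = - y"
proof -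
  have "hom_on K id" "(- y) * (- y) = id (y * y)" by (simp_all add: hom_on_def)
  then obtain g where g: "hom_on (adjoin K y) g" "\<And>x. x \<in> K \<Longrightarrow> g x = id x" "g y = - y"
    using hom_on_extend_adjoin[OF K(1) y] by blast
  have "F \<subseteq> adjoin K y" using K(2) subset_adjoin[OF K(1)] by blast
  then obtain s where s: "hom_on UNIV s" "\<And>x. x \<in> adjoin K y \<Longrightarrow> s x = g x"
    using hom_on_extends_to_UNIV[OF subfield_adjoin[OF K(1) y] _ g(1)] by blast
  have fixes_K: "s x = x" if "x \<in> K" for x
    using that s(2) g(2) subset_adjoin[OF K(1), of y] by auto
  then have "aut_over F s" using K(2) by (intro aut_over_if_hom_on_fixing[OF s(1)]) auto
  moreover have "s y = - y" using s(2) g(3) in_adjoin[OF K(1)] by simp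
  ultimately show ?thesis using that fixes_K by blast
qed

text \<open>A subfield \<open>K\<close> maximal among those avoiding \<open>z\<close> is not closed under square roots,
  and \<open>z\<close> lies in \<open>K(y)\<close> for the square root \<open>y\<close> it lacks; conjugating \<open>y\<close> moves \<open>z\<close>.\<close>

lemma exists_aut_over_moving:
  assumes "z \<notin> F"
  obtains s where "aut_over F s" "s z \<noteq> z"
proof -
  obtain K where K: "qc_subfield K" "F \<subseteq> K" "z \<notin> K"
    and maxK: "\<And>K'. qc_subfield K' \<Longrightarrow> K \<subseteq> K' \<Longrightarrow> z \<notin> K' \<Longrightarrow> K' = K"
    using maximal_subfield_avoiding[OF subfield_F assms] by blast
  have "K \<noteq> UNIV" using K(3) by blast
  then obtain y where y: "y * y \<in> K" "y \<notin> K"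
    using sqrt_closed_eq_UNIV[OF K(1,2)] by blast
  have "adjoin K y \<noteq> K" using in_adjoin[OF K(1)] y(2) by blast
  then have "z \<in> adjoin K y"
    using maxK[OF subfield_adjoin[OF K(1) y] subset_adjoin[OF K(1)]] by blast
  then obtain u v where uv: "u \<in> K" "v \<in> K" "z = u + v * y" unfolding adjoin_def by blast
  obtain s where s: "aut_over F s" "\<And>x. x \<in> K \<Longrightarrow> s x = x" "s y = - y"
    using conjugation_extends_to_aut_over[OF K(1,2) y] by blast
  then have sz: "s z = u - v * y" using uv by (simp add: aut_over_def)
  have "v \<noteq> 0" "y \<noteq> 0" using uv K(3) y(2) subfield_0[OF K(1)] by auto
  have "s z \<noteq> z"
  proof
    assume "s z = z"
    have "2 * (v * y) = (u + v * y) - (u - v * y)" by (simp add: algebra_simps)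
    also have "\<dots> = 0" using \<open>s z = z\<close> sz uv(3) by simp
    finally show False using two_nonzero \<open>v \<noteq> 0\<close> \<open>y \<noteq> 0\<close> by simp
  qed
  then show ?thesis using that s(1) by blast
qed

lemma mem_if_fixed_by_aut_over:
  assumes "\<And>s. aut_over F s \<Longrightarrow> s c = c"
  shows "c \<in> F"
proof (rule ccontr)
  assume "c \<notin> F"
  then obtain s where "aut_over F s" "s c \<noteq> c" by (rule exists_aut_over_moving)
  then show False using assms by blast
qed

lemma finite_aut_orbit: "finite (aut_orbit F x)"
proof -
  let ?T = "{x. finite (aut_orbit F x)}"
  have "?T = UNIV"
  proof (rule sqrt_closed_eq_UNIV)
    show F_T: "F \<subseteq> ?T" by (simp add: aut_orbit_of_mem subsetI)
    show "y \<in> ?T" if "x \<in> ?T" "y * y = x" for x y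
    proof -
      have "finite (\<Union>w\<in>aut_orbit F (y * y). {t. t * t = w})"
        using that by (auto intro: finite_sqrts)
      then show ?thesis by (simp add: finite_subset[OF aut_orbit_subset_sqrts[of F y]])
    qed
    show "qc_subfield ?T"
      unfolding qc_subfield_def
    proof (intro conjI ballI impI)
      show "0 \<in> ?T" "1 \<in> ?T"
        using F_T subfield_0[OF subfield_F] subfield_1[OF subfield_F] by blast+
      fix x y assume "x \<in> ?T" "y \<in> ?T"
      then have fin: "finite (case_prod h ` (aut_orbit F x \<times> aut_orbit F y))" for h by simp
      have "aut_orbit F (x + y) \<subseteq> case_prod (+) ` (aut_orbit F x \<times> aut_orbit F y)"
        "aut_orbit F (x * y) \<subseteq> case_prod (*) ` (aut_orbit F x \<times> aut_orbit F y)"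
        by (rule aut_orbit_subset_image2, simp add: aut_over_def)+
      then show "x + y \<in> ?T" "x * y \<in> ?T"
        using finite_subset fin[of "(+)"] fin[of "(*)"] by blast+
    next
      fix x assume "x \<in> ?T"
      then have fin: "finite (h ` aut_orbit F x)" for h by simp
      have "aut_orbit F (- x) \<subseteq> uminus ` aut_orbit F x"
        "aut_orbit F (inverse x) \<subseteq> inverse ` aut_orbit F x"
        by (rule aut_orbit_subset_image, simp add: aut_over_def)+
      then show "- x \<in> ?T" "inverse x \<in> ?T"
        using finite_subset fin[of uminus] fin[of inverse] by blast+
    qed
  qed
  then show ?thesis by blast
qed

lemma orbit_poly_over: "qc_over F (orbit_poly F x)"
  unfolding qc_over_def
proof
  fix i
  show "coeff (orbit_poly F x) i \<in> F"
  proof (rule mem_if_fixed_by_aut_over)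
    fix s assume s: "aut_over F s"
    then have "s (coeff (orbit_poly F x) i) = coeff (map_poly s (orbit_poly F x)) i"
      by (simp add: aut_over_def)
    then show "s (coeff (orbit_poly F x) i) = coeff (orbit_poly F x) i"
      by (simp add: map_poly_orbit_poly[OF s])
  qed
qed

lemma irreducible_orbit_poly: "qc_irreducible_over F (orbit_poly F x)"
  unfolding qc_irreducible_over_def
proof (intro conjI allI impI)
  show "qc_over F (orbit_poly F x)" by (rule orbit_poly_over)
  have "card (aut_orbit F x) \<noteq> 0" using finite_aut_orbit aut_orbit_self by (metis card_0_eq empty_iff)
  then show "1 \<le> degree (orbit_poly F x)" by (simp add: degree_orbit_poly)
  fix q r assume qr: "qc_over F q \<and> qc_over F r \<and> orbit_poly F x = q * r"
  then have nz: "q \<noteq> 0" "r \<noteq> 0" using monic_orbit_poly[of F x] by auto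
  then have card: "card (aut_orbit F x) = degree q + degree r"
    using qr by (simp add: degree_mult_eq flip: degree_orbit_poly)
  have "poly q x = 0 \<or> poly r x = 0"
    using qr orbit_poly_root[OF finite_aut_orbit] by (metis mult_eq_0_iff poly_mult)
  then show "degree q = 0 \<or> degree r = 0"
    using qr nz card card_aut_orbit_le_degree[of F q x] card_aut_orbit_le_degree[of F r x] by auto
qed

theorem galois_if_aut_over_stable:
  assumes E: "qc_subfield E" "F \<subseteq> E" and stable: "\<And>s. aut_over F s \<Longrightarrow> s ` E \<subseteq> E"
  shows "qc_galois F E"
  unfolding qc_galois_def
proof (intro conjI ballI)
  fix x assume "x \<in> E"
  obtain rs where rs: "distinct rs" "set rs = aut_orbit F x"
    using finite_distinct_list[OF finite_aut_orbit] by blast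
  then have "orbit_poly F x = smult (lead_coeff (orbit_poly F x)) (\<Prod>r\<leftarrow>rs. [:- r, 1:])"
    unfolding monic_orbit_poly unfolding orbit_poly_def
    using prod.distinct_set_conv_list[OF rs(1)] by simp
  moreover have "set rs \<subseteq> E"
    using rs(2) stable \<open>x \<in> E\<close> unfolding aut_orbit_def by blast
  ultimately show "\<exists>p. qc_irreducible_over F p \<and> poly p x = 0 \<and>
      (\<exists>rs. distinct rs \<and> set rs \<subseteq> E \<and> p = smult (lead_coeff p) (\<Prod>r\<leftarrow>rs. [:- r, 1:]))"
    using irreducible_orbit_poly orbit_poly_root[OF finite_aut_orbit] rs(1) by blast
qed (use E subfield_F in auto)

end

theorem lemma4:
  fixes F :: "'a::field set" and a s :: 'a
  assumes "qc_subfield F"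
    and "(2::'a) \<noteq> 0"
    and "\<forall>x::'a. \<exists>y. y * y = x"
    and "qc_quad_closure F = UNIV"
    and "a \<in> F" and "a \<noteq> 0" and "\<not> (\<exists>b\<in>F. b * b = a)"
    and "s * s = a"
  shows "qc_galois F (qc_tower F 4 \<inter> qc_tower (qc_gen_field (insert s F)) 3)"
proof -
  interpret quadratic_closure F using assms(1-4) by unfold_locales
  let ?L = "qc_gen_field (insert s F)"
  show ?thesis
  proof (rule galois_if_aut_over_stable)
    show "qc_subfield (qc_tower F 4 \<inter> qc_tower ?L 3)"
      by (intro subfield_Int subfield_tower subfield_F subfield_gen_field)
    show "F \<subseteq> qc_tower F 4 \<inter> qc_tower ?L 3"
      using subset_tower[of F 4] subset_tower[of ?L 3] gen_field_superset[of "insert s F"] by blast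
    fix t assume t: "aut_over F t"
    then have "t ` qc_tower F 4 = qc_tower F 4" "t ` qc_tower ?L 3 = qc_tower ?L 3"
      using gen_field_insert_sqrt_aut_over[OF t assms(5,8)]
      by (simp_all add: aut_over_def tower_image_aut image_aut_over)
    then show "t ` (qc_tower F 4 \<inter> qc_tower ?L 3) \<subseteq> qc_tower F 4 \<inter> qc_tower ?L 3" by blast
  qed
qed

end
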